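(* There exist no positive integers $a,b,c$ with $1\le a\le b$ and $c\ge 6$ such that every nonnegative integer can be written as $ax^2+by^2+c(z^2+zw+w^2)$ with $x,y,z,w\in\mathbb{Z}$. *)

theory Defs
  imports Main
begin

end

theory Submission
  imports Defs
begin

(* Every value below c of a x^2 + b y^2 + c (z^2 + z w + w^2) is a value of the binary form
   a x^2 + b y^2, since z^2 + z w + w^2 is a nonnegative integer. Representing 1 forces a = 1 and
   representing 2 forces b <= 2; but x^2 + y^2 misses 3 and x^2 + 2 y^2 misses 5, both below c. *)

lemma int_square_cases: "(x::int)^2 = 0 \<or> x^2 = 1 \<or> x^2 = 4 \<or> 9 \<le> x^2"
proof (cases "3 \<le> \<bar>x\<bar>")
  case True
  then have "3^2 \<le> \<bar>x\<bar>^2" by (intro power_mono) auto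
  then show ?thesis by simp
next
  case False
  then have "x \<in> {-2, -1, 0, 1, 2}" by auto
  then show ?thesis by auto
qed

lemma le_mult_square_int:
  fixes b y :: int
  assumes "0 \<le> b" "y \<noteq> 0"
  shows "b \<le> b * y^2"
proof -
  have "1 \<le> y^2" using assms(2) int_square_cases[of y] by auto
  then show ?thesis using mult_left_mono[OF _ assms(1)] by fastforce
qed

lemma eisenstein_form_nonneg: "0 \<le> (z::int)^2 + z*w + w^2"
proof -
  have "4 * (z^2 + z*w + w^2) = (2*z + w)^2 + 3*w^2"
    by (simp add: power2_eq_square algebra_simps)
  moreover have "0 \<le> (2*z + w)^2 + 3*w^2" by simp
  ultimately have "0 \<le> 4 * (z^2 + z*w + w^2)" by linarith
  then show ?thesis by simp
qed

lemma diagonal_form_ge_min_coeff: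
  fixes a b x y :: int
  assumes "0 \<le> a" "a \<le> b" "x \<noteq> 0 \<or> y \<noteq> 0"
  shows "a \<le> a*x^2 + b*y^2"
proof -
  have "0 \<le> a*x^2" "0 \<le> b*y^2" using assms(1,2) by simp_all
  moreover have "a \<le> a*x^2 \<or> a \<le> b*y^2"
    using assms le_mult_square_int[of a x] le_mult_square_int[of b y] by auto
  ultimately show ?thesis by linarith
qed

lemma small_value_binary_part:
  fixes a b c n x y z w :: int
  assumes "0 \<le> a" "0 \<le> b" "0 \<le> n" "n < c"
    and n: "n = a*x^2 + b*y^2 + c*(z^2 + z*w + w^2)"
  shows "n = a*x^2 + b*y^2"
proof -
  have binary_nonneg: "0 \<le> a*x^2 + b*y^2" using assms(1,2) by simp
  have "z^2 + z*w + w^2 = 0"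
  proof (rule ccontr)
    assume "z^2 + z*w + w^2 \<noteq> 0"
    then have "1 \<le> z^2 + z*w + w^2" using eisenstein_form_nonneg[of z w] by linarith
    then have "c \<le> c*(z^2 + z*w + w^2)"
      using mult_left_mono[of 1 _ c] assms(3,4) by simp
    then show False using n binary_nonneg assms(4) by linarith
  qed
  then show ?thesis using n by simp
qed

lemma sum_two_squares_ne_3: "(x::int)^2 + y^2 \<noteq> 3"
  using int_square_cases[of x] int_square_cases[of y] by auto

lemma square_plus_twice_square_ne_5: "(x::int)^2 + 2*y^2 \<noteq> 5"
  using int_square_cases[of x] int_square_cases[of y] by auto

lemma square_ne_2: "(x::int)^2 \<noteq> 2"
  using int_square_cases[of x] by auto

theorem theorem7p2:
  shows "\<not> (\<exists>a b c :: int. 1 \<le> a \<and> a \<le> b \<and> c \<ge> 6 \<and>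
           (\<forall>n::int. n \<ge> 0 \<longrightarrow>
              (\<exists>x y z w :: int. n = a * x^2 + b * y^2 + c * (z^2 + z * w + w^2))))"
proof
  assume "\<exists>a b c :: int. 1 \<le> a \<and> a \<le> b \<and> c \<ge> 6 \<and>
           (\<forall>n::int. n \<ge> 0 \<longrightarrow>
              (\<exists>x y z w :: int. n = a * x^2 + b * y^2 + c * (z^2 + z * w + w^2)))"
  then obtain a b c :: int where ab: "1 \<le> a" "a \<le> b" and "6 \<le> c"
    and universal: "\<And>n. 0 \<le> n \<Longrightarrow> \<exists>x y z w. n = a*x^2 + b*y^2 + c*(z^2 + z*w + w^2)"
    by blast
  have binary: "\<exists>x y. n = a*x^2 + b*y^2" if "0 \<le> n" "n < 6" for n
    using universal[OF \<open>0 \<le> n\<close>] small_value_binary_part[of a b n c] ab that \<open>6 \<le> c\<close>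
    by fastforce
  obtain x\<^sub>1 y\<^sub>1 where one: "1 = a*x\<^sub>1^2 + b*y\<^sub>1^2" using binary[of 1] by auto
  have "a = 1"
    using diagonal_form_ge_min_coeff[of a b x\<^sub>1 y\<^sub>1] one ab by fastforce
  obtain x\<^sub>2 y\<^sub>2 where two: "2 = x\<^sub>2^2 + b*y\<^sub>2^2" using binary[of 2] \<open>a = 1\<close> by auto
  have "y\<^sub>2 \<noteq> 0" using two square_ne_2[of x\<^sub>2] by auto
  then have "b \<le> 2" using two le_mult_square_int[of b y\<^sub>2] ab zero_le_power2[of x\<^sub>2] by linarith
  then consider "b = 1" | "b = 2" using ab \<open>a = 1\<close> by linarith
  then show False
  proof cases
    case 1
    then show False using binary[of 3] \<open>a = 1\<close> sum_two_squares_ne_3 by auto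
  next
    case 2
    then show False using binary[of 5] \<open>a = 1\<close> square_plus_twice_square_ne_5 by fastforce
  qed
qed

end
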